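(* Let $1\le p\le 2$ and let $\{f_n\}$ be a $K$-unconditional basic sequence in $L^p(\mathbb R)$ with $C=\sup_n\|f_n\|_p<\infty$. Suppose there are measurable sets $E_n\subset\mathbb R$ and constants $M$ and $\delta>0$ such that $\sum_n\mathbf 1_{E_n}\le M$ a.e. and $\|f_n|_{E_n}\|_p\ge\delta$ for every $n$. Then $\{f_n\}$ is equivalent to the standard unit vector basis of $\ell^p$: $$\Big\|\sum_na_nf_n\Big\|_p\asymp\Big(\sum_n|a_n|^p\Big)^{1/p}$$ for all finitely supported scalars $\{a_n\}$, where the implied constants depend only on $p,K,C,M,\delta$.
   Context: A sequence $\{f_n\}$ in a Banach space is a $K$-unconditional basic sequence if it is a basis of its closed span and $\|\sum_n\theta_na_nf_n\|\le K\|\sum_na_nf_n\|$ for all finitely supported scalars $\{a_n\}$ and all scalars $|\theta_n|\le1$. *)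

theory Defs
  imports "HOL-Analysis.Analysis"
begin

definition memLp :: "real \<Rightarrow> (real \<Rightarrow> complex) \<Rightarrow> bool" where
  "memLp p g \<longleftrightarrow> g \<in> borel_measurable lebesgue \<and>
     integrable lebesgue (\<lambda>x. cmod (g x) powr p)"

definition Lp_norm :: "real \<Rightarrow> (real \<Rightarrow> complex) \<Rightarrow> real" where
  "Lp_norm p g = (\<integral>x. cmod (g x) powr p \<partial>lebesgue) powr (1 / p)"

definition in_closed_span :: "real \<Rightarrow> (nat \<Rightarrow> real \<Rightarrow> complex) \<Rightarrow> (real \<Rightarrow> complex) \<Rightarrow> bool" where
  "in_closed_span p f g \<longleftrightarrow> memLp p g \<and>
     (\<forall>\<epsilon>>0. \<exists>N a. Lp_norm p (\<lambda>x. g x - (\<Sum>n<N. a n * f n x)) < \<epsilon>)"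

definition basic_seq :: "real \<Rightarrow> (nat \<Rightarrow> real \<Rightarrow> complex) \<Rightarrow> bool" where
  "basic_seq p f \<longleftrightarrow> (\<forall>n. memLp p (f n)) \<and>
     (\<forall>g. in_closed_span p f g \<longrightarrow>
        (\<exists>!a::nat \<Rightarrow> complex.
            (\<lambda>N. Lp_norm p (\<lambda>x. g x - (\<Sum>n<N. a n * f n x))) \<longlonglongrightarrow> 0))"

definition K_unconditional_basic :: "real \<Rightarrow> real \<Rightarrow> (nat \<Rightarrow> real \<Rightarrow> complex) \<Rightarrow> bool" where
  "K_unconditional_basic p K f \<longleftrightarrow> basic_seq p f \<and>
     (\<forall>(a::nat \<Rightarrow> complex) (\<theta>::nat \<Rightarrow> complex) N. (\<forall>n. cmod (\<theta> n) \<le> 1) \<longrightarrow>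
        Lp_norm p (\<lambda>x. \<Sum>n<N. \<theta> n * a n * f n x)
          \<le> K * Lp_norm p (\<lambda>x. \<Sum>n<N. a n * f n x))"

end

theory Submission
  imports Defs
begin

text \<open>Average over independent random signs \<open>e\<^sub>n = \<plusminus>1\<close>. By \<open>K\<close>-unconditionality,
  \<open>\<parallel>\<Sum> a\<^sub>n f\<^sub>n\<parallel>\<^sub>p\<^sup>p\<close> agrees up to a factor \<open>K\<^sup>p\<close> with the average of
  \<open>\<parallel>\<Sum> e\<^sub>n a\<^sub>n f\<^sub>n\<parallel>\<^sub>p\<^sup>p\<close>, i.e. with the integral of the pointwise average \<open>R(x)\<close> of
  \<open>\<bar>\<Sum> e\<^sub>n a\<^sub>n f\<^sub>n(x)\<bar>\<^sup>p\<close>. Adding one sign at a time shows that for \<open>1 \<le> p \<le> 2\<close>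
  \<open>max\<^sub>n \<bar>a\<^sub>n f\<^sub>n(x)\<bar>\<^sup>p \<le> R(x) \<le> \<Sum>\<^sub>n \<bar>a\<^sub>n f\<^sub>n(x)\<bar>\<^sup>p\<close>: the left inequality by
  convexity of \<open>t\<^sup>p\<close>, the right one by the parallelogram law and concavity of \<open>t\<^bsup>p/2\<^esup>\<close>.
  Integrating the right inequality gives \<open>\<parallel>\<Sum> a\<^sub>n f\<^sub>n\<parallel>\<^sub>p\<^sup>p \<le> K\<^sup>p C\<^sup>p \<Sum> \<bar>a\<^sub>n\<bar>\<^sup>p\<close>.
  Since at most \<open>M\<close> of the sets \<open>E\<^sub>n\<close> contain \<open>x\<close>, the left one gives
  \<open>\<Sum>\<^sub>n 1\<^bsub>E\<^sub>n\<^esub>(x) \<bar>a\<^sub>n f\<^sub>n(x)\<bar>\<^sup>p \<le> M R(x)\<close>, and integrating yields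
  \<open>\<delta>\<^sup>p \<Sum> \<bar>a\<^sub>n\<bar>\<^sup>p \<le> M K\<^sup>p \<parallel>\<Sum> a\<^sub>n f\<^sub>n\<parallel>\<^sub>p\<^sup>p\<close>.\<close>

section \<open>Two-point inequalities for \<open>p\<close>-th powers\<close>

lemma powr_midpoint_le:
  fixes p x y :: real
  assumes "1 \<le> p" "0 \<le> x" "0 \<le> y"
  shows "((x + y) / 2) powr p \<le> (x powr p + y powr p) / 2"
proof (cases "x = 0 \<or> y = 0")
  case True
  have "(z / 2) powr p \<le> z powr p / 2" if "0 \<le> z" for z :: real
  proof -
    have "2 \<le> (2::real) powr p"
      using powr_mono[of 1 p 2] assms(1) by simp
    then have "z powr p / 2 powr p \<le> z powr p / 2"
      by (intro divide_left_mono) auto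
    then show ?thesis by (simp add: powr_divide that)
  qed
  then show ?thesis using True assms by auto
next
  case False
  then have "x > 0" "y > 0" using assms by auto
  have "(\<lambda>x. x powr p) ((1 - 1/2) *\<^sub>R x + (1/2) *\<^sub>R y) \<le> (1 - 1/2) * x powr p + (1/2) * y powr p"
    by (rule convex_onD[OF powr_convex[OF assms(1)]]) (use \<open>x > 0\<close> \<open>y > 0\<close> in auto)
  then show ?thesis by (simp add: field_simps)
qed

lemma powr_add_le:
  fixes q a b :: real
  assumes "0 < q" "q \<le> 1" "0 \<le> a" "0 \<le> b"
  shows "(a + b) powr q \<le> a powr q + b powr q"
proof (cases "a + b = 0")
  case True
  then show ?thesis using assms by auto
next
  case False
  define s where "s = a + b"
  have s: "s > 0" using False assms s_def by auto
  have le_powr: "z / s \<le> (z / s) powr q" if "0 \<le> z" "z \<le> s" for z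
    using powr_mono'[of q 1 "z / s"] that s assms by simp
  have "s powr q = s powr q * (a / s) + s powr q * (b / s)"
    using s by (simp add: s_def flip: distrib_left add_divide_distrib)
  also have "\<dots> \<le> s powr q * (a / s) powr q + s powr q * (b / s) powr q"
    using le_powr[of a] le_powr[of b] assms s_def by (intro add_mono mult_left_mono) auto
  also have "\<dots> = a powr q + b powr q"
    using s assms by (simp add: powr_divide)
  finally show ?thesis by (simp add: s_def)
qed

lemma powr_midpoint_ge:
  fixes q x y :: real
  assumes "0 < q" "q \<le> 1" "0 \<le> x" "0 \<le> y"
  shows "(x powr q + y powr q) / 2 \<le> ((x + y) / 2) powr q"
proof -
  have "((x powr q + y powr q) / 2) powr (1/q) \<le> ((x powr q) powr (1/q) + (y powr q) powr (1/q)) / 2"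
    using assms by (intro powr_midpoint_le) auto
  also have "\<dots> = (x + y) / 2"
    using assms by (simp add: powr_powr)
  finally have "(((x powr q + y powr q) / 2) powr (1/q)) powr q \<le> ((x + y) / 2) powr q"
    using assms by (intro powr_mono2) auto
  then show ?thesis using assms by (simp add: powr_powr)
qed

lemma norm_powr_parallelogram_le:
  fixes u v :: "'a :: real_inner" and p :: real
  assumes "0 < p" "p \<le> 2"
  shows "(norm (u + v) powr p + norm (u - v) powr p) / 2 \<le> norm u powr p + norm v powr p"
proof -
  have sq: "norm w powr p = ((norm w)\<^sup>2) powr (p/2)" for w :: 'a
  proof -
    have "(norm w)\<^sup>2 = norm w powr 2" by simp
    then have "((norm w)\<^sup>2) powr (p/2) = norm w powr (2 * (p/2))" by (simp only: powr_powr)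
    then show ?thesis by simp
  qed
  have parallelogram: "((norm (u + v))\<^sup>2 + (norm (u - v))\<^sup>2) / 2 = (norm u)\<^sup>2 + (norm v)\<^sup>2"
    by (simp add: power2_norm_eq_inner inner_add inner_diff inner_commute)
  have "(norm (u + v) powr p + norm (u - v) powr p) / 2
      = (((norm (u + v))\<^sup>2) powr (p/2) + ((norm (u - v))\<^sup>2) powr (p/2)) / 2"
    by (simp only: sq)
  also have "\<dots> \<le> ((norm u)\<^sup>2 + (norm v)\<^sup>2) powr (p/2)"
    unfolding parallelogram[symmetric] using assms by (intro powr_midpoint_ge) auto
  also have "\<dots> \<le> ((norm u)\<^sup>2) powr (p/2) + ((norm v)\<^sup>2) powr (p/2)"
    using assms by (intro powr_add_le) auto
  finally show ?thesis by (simp only: sq)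
qed

lemma norm_powr_le_parallelogram:
  fixes u v :: "'a :: real_normed_vector" and p :: real
  assumes "1 \<le> p"
  shows "norm u powr p \<le> (norm (u + v) powr p + norm (u - v) powr p) / 2"
    and "norm v powr p \<le> (norm (u + v) powr p + norm (u - v) powr p) / 2"
proof -
  have *: "norm w powr p \<le> (norm (u + v) powr p + norm (u - v) powr p) / 2"
    if "norm (2 *\<^sub>R w) \<le> norm (u + v) + norm (u - v)" for w
  proof -
    have "norm w powr p \<le> ((norm (u + v) + norm (u - v)) / 2) powr p"
      using that assms by (intro powr_mono2) auto
    also have "\<dots> \<le> (norm (u + v) powr p + norm (u - v) powr p) / 2"
      using assms by (intro powr_midpoint_le) auto
    finally show ?thesis .
  qed
  show "norm u powr p \<le> (norm (u + v) powr p + norm (u - v) powr p) / 2"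
    using norm_triangle_ineq[of "u + v" "u - v"] by (intro *) (simp add: scaleR_2)
  show "norm v powr p \<le> (norm (u + v) powr p + norm (u - v) powr p) / 2"
    using norm_triangle_ineq4[of "u + v" "u - v"] by (intro *) (simp add: scaleR_2)
qed

section \<open>Averages over random signs\<close>

text \<open>\<open>sign_avg N F\<close> is the expectation of \<open>F e\<close> when \<open>e 0, \<dots>, e (N - 1)\<close> are independent
  uniformly distributed signs; the coordinates \<open>e n\<close> with \<open>n \<ge> N\<close> are fixed to \<open>1\<close>.\<close>

fun sign_avg :: "nat \<Rightarrow> ((nat \<Rightarrow> real) \<Rightarrow> real) \<Rightarrow> real" where
  "sign_avg 0 F = F (\<lambda>_. 1)"
| "sign_avg (Suc N) F = (sign_avg N (\<lambda>e. F (e(N := 1))) + sign_avg N (\<lambda>e. F (e(N := -1)))) / 2"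

definition sign_vector :: "(nat \<Rightarrow> real) \<Rightarrow> bool" where
  "sign_vector e \<longleftrightarrow> (\<forall>n. \<bar>e n\<bar> = 1)"

lemma sign_vector_upd: "sign_vector e \<Longrightarrow> c = 1 \<or> c = -1 \<Longrightarrow> sign_vector (e(N := c))"
  by (auto simp: sign_vector_def)

lemma sign_avg_mono: "(\<And>e. sign_vector e \<Longrightarrow> F e \<le> G e) \<Longrightarrow> sign_avg N F \<le> sign_avg N G"
proof (induction N arbitrary: F G)
  case 0
  then show ?case by (simp add: sign_vector_def)
next
  case (Suc N)
  have "sign_avg N (\<lambda>e. F (e(N := c))) \<le> sign_avg N (\<lambda>e. G (e(N := c)))" if "c = 1 \<or> c = -1" for c
    by (rule Suc.IH) (use Suc.prems that sign_vector_upd in blast)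
  then show ?case by (simp add: add_mono divide_right_mono)
qed

lemma sign_avg_const [simp]: "sign_avg N (\<lambda>_. c) = c"
  by (induction N arbitrary: c) auto

lemma sign_avg_mult_left: "sign_avg N (\<lambda>e. c * F e) = c * sign_avg N F"
  by (induction N arbitrary: F) (auto simp: algebra_simps)

lemma sign_avg_integral:
  assumes "\<And>e. sign_vector e \<Longrightarrow> integrable M (h e)"
  shows "integrable M (\<lambda>x. sign_avg N (\<lambda>e. h e x)) \<and>
    (\<integral>x. sign_avg N (\<lambda>e. h e x) \<partial>M) = sign_avg N (\<lambda>e. \<integral>x. h e x \<partial>M)"
  using assms
proof (induction N arbitrary: h)
  case (Suc N)
  have "integrable M (\<lambda>x. sign_avg N (\<lambda>e. h (e(N := c)) x)) \<and>
      (\<integral>x. sign_avg N (\<lambda>e. h (e(N := c)) x) \<partial>M) = sign_avg N (\<lambda>e. \<integral>x. h (e(N := c)) x \<partial>M)"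
    if "c = 1 \<or> c = -1" for c
    by (rule Suc.IH) (use Suc.prems that sign_vector_upd in blast)
  then show ?case by simp
qed (simp add: sign_vector_def)

lemma sign_avg_Suc_signed_sum:
  fixes g :: "nat \<Rightarrow> 'a :: real_normed_vector"
  shows "sign_avg (Suc N) (\<lambda>e. \<phi> (c + (\<Sum>n<Suc N. e n *\<^sub>R g n))) =
    (sign_avg N (\<lambda>e. \<phi> ((c + g N) + (\<Sum>n<N. e n *\<^sub>R g n))) +
     sign_avg N (\<lambda>e. \<phi> ((c - g N) + (\<Sum>n<N. e n *\<^sub>R g n)))) / 2"
proof -
  have "(\<Sum>n<N. (e(N := s)) n *\<^sub>R g n) = (\<Sum>n<N. e n *\<^sub>R g n)" for e and s :: real
    by (intro sum.cong) auto
  then show ?thesis by (simp add: algebra_simps)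
qed

lemma sign_avg_norm_powr_le:
  fixes g :: "nat \<Rightarrow> 'a :: real_inner"
  assumes "0 < p" "p \<le> 2"
  shows "sign_avg N (\<lambda>e. norm (c + (\<Sum>n<N. e n *\<^sub>R g n)) powr p)
    \<le> norm c powr p + (\<Sum>n<N. norm (g n) powr p)"
proof (induction N arbitrary: c)
  case (Suc N c)
  let ?S = "\<Sum>n<N. norm (g n) powr p"
  have "sign_avg (Suc N) (\<lambda>e. norm (c + (\<Sum>n<Suc N. e n *\<^sub>R g n)) powr p)
      \<le> ((norm (c + g N) powr p + ?S) + (norm (c - g N) powr p + ?S)) / 2"
    unfolding sign_avg_Suc_signed_sum[where \<phi> = "\<lambda>v. norm v powr p"]
    by (intro divide_right_mono add_mono Suc) simp
  also have "\<dots> \<le> norm c powr p + norm (g N) powr p + ?S"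
    using norm_powr_parallelogram_le[OF assms, of c "g N"] by simp
  finally show ?case by simp
qed simp

lemma norm_powr_le_sign_avg:
  fixes g :: "nat \<Rightarrow> 'a :: real_normed_vector"
  assumes "1 \<le> p"
  shows "norm c powr p \<le> sign_avg N (\<lambda>e. norm (c + (\<Sum>n<N. e n *\<^sub>R g n)) powr p)"
proof (induction N arbitrary: c)
  case (Suc N c)
  show ?case
    unfolding sign_avg_Suc_signed_sum[where \<phi> = "\<lambda>v. norm v powr p"]
    using Suc[of "c + g N"] Suc[of "c - g N"] norm_powr_le_parallelogram(1)[OF assms, of c "g N"]
    by argo
qed simp

lemma norm_powr_term_le_sign_avg:
  fixes g :: "nat \<Rightarrow> 'a :: real_normed_vector"
  assumes "1 \<le> p" "j < N"
  shows "norm (g j) powr p \<le> sign_avg N (\<lambda>e. norm (c + (\<Sum>n<N. e n *\<^sub>R g n)) powr p)"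
  using assms(2)
proof (induction N arbitrary: c)
  case (Suc N c)
  consider "j = N" | "j < N" using Suc.prems by linarith
  then show ?case
  proof cases
    case 1
    show ?thesis
      unfolding \<open>j = N\<close> sign_avg_Suc_signed_sum[where \<phi> = "\<lambda>v. norm v powr p"]
      using norm_powr_le_parallelogram(2)[OF assms(1), where u = c and v = "g N"]
        norm_powr_le_sign_avg[OF assms(1), of "c + g N" N g]
        norm_powr_le_sign_avg[OF assms(1), of "c - g N" N g]
      by argo
  next
    case 2
    show ?thesis
      unfolding sign_avg_Suc_signed_sum[where \<phi> = "\<lambda>v. norm v powr p"]
      using Suc.IH[OF 2, of "c + g N"] Suc.IH[OF 2, of "c - g N"] by argo
  qed
qed simp

lemma weighted_norm_powr_sum_le_sign_avg:
  fixes g :: "nat \<Rightarrow> 'a :: real_normed_vector"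
  assumes "1 \<le> p" "\<And>n. n < N \<Longrightarrow> 0 \<le> w n" "(\<Sum>n<N. w n) \<le> M"
  shows "(\<Sum>n<N. w n * norm (g n) powr p) \<le> M * sign_avg N (\<lambda>e. norm (\<Sum>n<N. e n *\<^sub>R g n) powr p)"
proof -
  define R where "R = sign_avg N (\<lambda>e. norm (\<Sum>n<N. e n *\<^sub>R g n) powr p)"
  have "0 \<le> R"
    using norm_powr_le_sign_avg[OF assms(1), of 0 N g] by (simp add: R_def)
  have "(\<Sum>n<N. w n * norm (g n) powr p) \<le> (\<Sum>n<N. w n * R)"
    using norm_powr_term_le_sign_avg[OF assms(1), of _ N g 0] assms(2)
    by (intro sum_mono mult_left_mono) (simp_all add: R_def)
  also have "\<dots> \<le> M * R"
    using assms(3) \<open>0 \<le> R\<close> by (simp add: mult_right_mono flip: sum_distrib_right)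
  finally show ?thesis by (simp add: R_def)
qed

section \<open>Unconditional basic sequences in \<open>L\<^sup>p\<close>\<close>

lemma memLp_add:
  assumes "1 \<le> p" "memLp p g" "memLp p h"
  shows "memLp p (\<lambda>x. g x + h x)"
proof -
  have "g \<in> borel_measurable lebesgue" "h \<in> borel_measurable lebesgue"
    using assms by (simp_all add: memLp_def)
  then have meas: "(\<lambda>x. g x + h x) \<in> borel_measurable lebesgue"
    by measurable
  have bound: "cmod (g x + h x) powr p \<le> 2 powr p * ((cmod (g x) powr p + cmod (h x) powr p) / 2)" for x
  proof -
    have "cmod (g x + h x) powr p \<le> (cmod (g x) + cmod (h x)) powr p"
      using assms(1) norm_triangle_ineq[of "g x" "h x"] by (intro powr_mono2) auto
    also have "\<dots> = 2 powr p * ((cmod (g x) + cmod (h x)) / 2) powr p"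
      by (simp add: powr_divide)
    also have "\<dots> \<le> 2 powr p * ((cmod (g x) powr p + cmod (h x) powr p) / 2)"
      using assms(1) by (intro mult_left_mono powr_midpoint_le) auto
    finally show ?thesis .
  qed
  have "integrable lebesgue (\<lambda>x. cmod (g x + h x) powr p)"
    by (rule Bochner_Integration.integrable_bound[where f = "\<lambda>x. 2 powr p * ((cmod (g x) powr p + cmod (h x) powr p) / 2)"])
      (use assms meas bound in \<open>auto simp: memLp_def\<close>)
  with meas show ?thesis by (simp add: memLp_def)
qed

lemma memLp_mult_left:
  assumes "memLp p g"
  shows "memLp p (\<lambda>x. c * g x)"
proof -
  have "g \<in> borel_measurable lebesgue"
    using assms by (simp add: memLp_def)
  then have "(\<lambda>x. c * g x) \<in> borel_measurable lebesgue"
    by measurable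
  with assms show ?thesis by (simp add: memLp_def norm_mult powr_mult)
qed

lemma memLp_sum:
  fixes N :: nat
  assumes "1 \<le> p" "\<And>n. n < N \<Longrightarrow> memLp p (h n)"
  shows "memLp p (\<lambda>x. \<Sum>n<N. h n x)"
  using assms(2)
proof (induction N)
  case (Suc N)
  then show ?case using memLp_add[OF assms(1)] by simp
qed (simp add: memLp_def)

lemma Lp_norm_nonneg: "0 \<le> Lp_norm p g"
  by (simp add: Lp_norm_def)

lemma Lp_norm_powr:
  assumes "0 < p"
  shows "Lp_norm p g powr p = (\<integral>x. cmod (g x) powr p \<partial>lebesgue)"
proof -
  have "0 \<le> (\<integral>x. cmod (g x) powr p \<partial>lebesgue)" by simp
  then show ?thesis using assms by (simp add: Lp_norm_def powr_powr)
qed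

lemma norm_indicator_scaleR_powr:
  fixes z :: "'a :: real_normed_vector"
  assumes "0 < p"
  shows "norm (indicator A x *\<^sub>R z) powr p = indicator A x * norm z powr p"
  using assms by (cases "x \<in> A") auto

lemma integrable_indicator_norm_powr:
  assumes "memLp p g" "A \<in> sets lebesgue"
  shows "integrable lebesgue (\<lambda>x. indicator A x * cmod (g x) powr p)"
  using integrable_mult_indicator[OF assms(2), of "\<lambda>x. cmod (g x) powr p"] assms(1)
  by (simp add: memLp_def)

lemma Lp_norm_indicator_le:
  assumes "0 < p" "memLp p g" "A \<in> sets lebesgue"
  shows "Lp_norm p (\<lambda>x. indicator A x *\<^sub>R g x) \<le> Lp_norm p g"
  unfolding Lp_norm_def norm_indicator_scaleR_powr[OF assms(1)]
proof (intro powr_mono2 integral_mono)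
  show "integrable lebesgue (\<lambda>x. indicator A x * cmod (g x) powr p)"
    using assms(2,3) by (rule integrable_indicator_norm_powr)
  show "integrable lebesgue (\<lambda>x. cmod (g x) powr p)"
    using assms by (simp add: memLp_def)
qed (use assms(1) in \<open>auto simp: indicator_def\<close>)

lemma K_unconditional_basic_memLp: "K_unconditional_basic p K f \<Longrightarrow> memLp p (f n)"
  by (simp add: K_unconditional_basic_def basic_seq_def)

lemma K_unconditional_basicD:
  assumes "K_unconditional_basic p K f" "\<And>n. cmod (\<theta> n) \<le> 1"
  shows "Lp_norm p (\<lambda>x. \<Sum>n<N. \<theta> n * a n * f n x) \<le> K * Lp_norm p (\<lambda>x. \<Sum>n<N. a n * f n x)"
  using assms unfolding K_unconditional_basic_def by blast

lemma K_unconditional_basic_ge_1: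
  assumes "K_unconditional_basic p K f" "0 < Lp_norm p (f n)"
  shows "1 \<le> K"
proof -
  have "Lp_norm p (\<lambda>x. \<Sum>m<Suc n. 1 * (if m = n then 1 else 0) * f m x)
      \<le> K * Lp_norm p (\<lambda>x. \<Sum>m<Suc n. (if m = n then 1 else 0) * f m x)"
    by (rule K_unconditional_basicD[OF assms(1)]) simp
  then have "Lp_norm p (f n) \<le> K * Lp_norm p (f n)"
    by (simp add: if_distrib cong: if_cong)
  with assms(2) show ?thesis by simp
qed

lemma K_unconditional_basic_sign_change:
  assumes "0 < p" "0 \<le> K" "K_unconditional_basic p K f" "sign_vector e"
  shows "Lp_norm p (\<lambda>x. \<Sum>n<N. e n *\<^sub>R (a n * f n x)) powr p
      \<le> K powr p * Lp_norm p (\<lambda>x. \<Sum>n<N. a n * f n x) powr p"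
    and "Lp_norm p (\<lambda>x. \<Sum>n<N. a n * f n x) powr p
      \<le> K powr p * Lp_norm p (\<lambda>x. \<Sum>n<N. e n *\<^sub>R (a n * f n x)) powr p"
proof -
  have powr_le: "X powr p \<le> K powr p * Y powr p" if "X \<le> K * Y" "0 \<le> X" "0 \<le> Y" for X Y :: real
  proof -
    have "X powr p \<le> (K * Y) powr p"
      using that assms(1) by (intro powr_mono2) auto
    then show ?thesis using assms(2) that by (simp add: powr_mult)
  qed
  have unc: "Lp_norm p (\<lambda>x. \<Sum>n<N. of_real (e n) * b n * f n x) \<le> K * Lp_norm p (\<lambda>x. \<Sum>n<N. b n * f n x)"
    for b :: "nat \<Rightarrow> complex"
    using assms(4) by (intro K_unconditional_basicD[OF assms(3)]) (auto simp: sign_vector_def)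
  have signed: "of_real (e n) * a n * f n x = e n *\<^sub>R (a n * f n x)" for n x
    by (simp add: scaleR_conv_of_real)
  have unsigned: "of_real (e n) * (of_real (e n) * a n) * f n x = a n * f n x" for n x
  proof -
    have "e n * e n = 1" using assms(4) by (metis abs_mult_self_eq mult_1 sign_vector_def)
    then have "(of_real (e n) * of_real (e n) :: complex) = 1" by (metis of_real_1 of_real_mult)
    then show ?thesis by (simp flip: mult.assoc)
  qed
  show "Lp_norm p (\<lambda>x. \<Sum>n<N. e n *\<^sub>R (a n * f n x)) powr p
      \<le> K powr p * Lp_norm p (\<lambda>x. \<Sum>n<N. a n * f n x) powr p"
    using unc[of a] by (intro powr_le) (simp_all add: signed Lp_norm_nonneg)
  show "Lp_norm p (\<lambda>x. \<Sum>n<N. a n * f n x) powr p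
      \<le> K powr p * Lp_norm p (\<lambda>x. \<Sum>n<N. e n *\<^sub>R (a n * f n x)) powr p"
    using unc[of "\<lambda>n. of_real (e n) * a n"] by (intro powr_le) (simp_all add: signed unsigned Lp_norm_nonneg)
qed

lemma K_unconditional_basic_sign_avg:
  fixes a :: "nat \<Rightarrow> complex" and N :: nat
  assumes "1 \<le> p" "0 \<le> K" "K_unconditional_basic p K f"
  defines "R \<equiv> \<lambda>x. sign_avg N (\<lambda>e. cmod (\<Sum>n<N. e n *\<^sub>R (a n * f n x)) powr p)"
  shows "integrable lebesgue R"
    and "Lp_norm p (\<lambda>x. \<Sum>n<N. a n * f n x) powr p \<le> K powr p * (\<integral>x. R x \<partial>lebesgue)"
    and "(\<integral>x. R x \<partial>lebesgue) \<le> K powr p * Lp_norm p (\<lambda>x. \<Sum>n<N. a n * f n x) powr p"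
proof -
  have "0 < p" using assms(1) by simp
  have "memLp p (\<lambda>x. \<Sum>n<N. e n *\<^sub>R (a n * f n x))" for e
  proof (intro memLp_sum assms(1))
    fix n
    show "memLp p (\<lambda>x. e n *\<^sub>R (a n * f n x))"
      using memLp_mult_left[OF K_unconditional_basic_memLp[OF assms(3)], of "of_real (e n) * a n"]
      by (simp add: scaleR_conv_of_real mult.assoc)
  qed
  then have R: "integrable lebesgue R \<and>
      (\<integral>x. R x \<partial>lebesgue) = sign_avg N (\<lambda>e. Lp_norm p (\<lambda>x. \<Sum>n<N. e n *\<^sub>R (a n * f n x)) powr p)"
    unfolding R_def Lp_norm_powr[OF \<open>0 < p\<close>] by (intro sign_avg_integral) (simp add: memLp_def)
  then show "integrable lebesgue R" ..
  from R have avg: "(\<integral>x. R x \<partial>lebesgue)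
      = sign_avg N (\<lambda>e. Lp_norm p (\<lambda>x. \<Sum>n<N. e n *\<^sub>R (a n * f n x)) powr p)" ..
  have "Lp_norm p (\<lambda>x. \<Sum>n<N. a n * f n x) powr p
      \<le> sign_avg N (\<lambda>e. K powr p * Lp_norm p (\<lambda>x. \<Sum>n<N. e n *\<^sub>R (a n * f n x)) powr p)"
    using sign_avg_mono[where F = "\<lambda>_. Lp_norm p (\<lambda>x. \<Sum>n<N. a n * f n x) powr p"]
      K_unconditional_basic_sign_change(2)[OF \<open>0 < p\<close> assms(2,3)] by simp
  then show "Lp_norm p (\<lambda>x. \<Sum>n<N. a n * f n x) powr p \<le> K powr p * (\<integral>x. R x \<partial>lebesgue)"
    by (simp add: avg sign_avg_mult_left)
  have "sign_avg N (\<lambda>e. Lp_norm p (\<lambda>x. \<Sum>n<N. e n *\<^sub>R (a n * f n x)) powr p)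
      \<le> K powr p * Lp_norm p (\<lambda>x. \<Sum>n<N. a n * f n x) powr p"
    using sign_avg_mono[where G = "\<lambda>_. K powr p * Lp_norm p (\<lambda>x. \<Sum>n<N. a n * f n x) powr p"]
      K_unconditional_basic_sign_change(1)[OF \<open>0 < p\<close> assms(2,3)] by simp
  then show "(\<integral>x. R x \<partial>lebesgue) \<le> K powr p * Lp_norm p (\<lambda>x. \<Sum>n<N. a n * f n x) powr p"
    by (simp add: avg)
qed

lemma K_unconditional_basic_Lp_upper:
  fixes a :: "nat \<Rightarrow> complex" and N :: nat
  assumes "1 \<le> p" "p \<le> 2" "0 \<le> K" "K_unconditional_basic p K f"
    and "\<And>n. n < N \<Longrightarrow> Lp_norm p (f n) \<le> C"
  shows "Lp_norm p (\<lambda>x. \<Sum>n<N. a n * f n x) powr p \<le> K powr p * C powr p * (\<Sum>n<N. cmod (a n) powr p)"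
proof -
  have "0 < p" using assms(1) by simp
  have int_f: "integrable lebesgue (\<lambda>x. cmod (f n x) powr p)" for n
    using K_unconditional_basic_memLp[OF assms(4)] by (simp add: memLp_def)
  note avg = K_unconditional_basic_sign_avg[OF assms(1,3,4), where a = a and N = N]
  have "Lp_norm p (\<lambda>x. \<Sum>n<N. a n * f n x) powr p
      \<le> K powr p * (\<integral>x. sign_avg N (\<lambda>e. cmod (\<Sum>n<N. e n *\<^sub>R (a n * f n x)) powr p) \<partial>lebesgue)"
    by (rule avg(2))
  also have "\<dots> \<le> K powr p * (\<integral>x. (\<Sum>n<N. cmod (a n) powr p * cmod (f n x) powr p) \<partial>lebesgue)"
  proof (intro mult_left_mono integral_mono avg(1))
    fix x
    show "sign_avg N (\<lambda>e. cmod (\<Sum>n<N. e n *\<^sub>R (a n * f n x)) powr p)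
        \<le> (\<Sum>n<N. cmod (a n) powr p * cmod (f n x) powr p)"
      using sign_avg_norm_powr_le[OF \<open>0 < p\<close> assms(2), of N 0 "\<lambda>n. a n * f n x"]
      by (simp add: norm_mult powr_mult)
  qed (use int_f in auto)
  also have "\<dots> = K powr p * (\<Sum>n<N. cmod (a n) powr p * Lp_norm p (f n) powr p)"
    using int_f by (simp add: Lp_norm_powr[OF \<open>0 < p\<close>])
  also have "\<dots> \<le> K powr p * (\<Sum>n<N. cmod (a n) powr p * C powr p)"
    using assms(5) \<open>0 < p\<close> by (intro mult_left_mono sum_mono powr_mono2) (auto simp: Lp_norm_nonneg)
  finally show ?thesis
    by (simp add: sum_distrib_left sum_distrib_right mult_ac)
qed

lemma K_unconditional_basic_Lp_lower:
  fixes a :: "nat \<Rightarrow> complex" and N :: nat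
  assumes "1 \<le> p" "0 \<le> K" "K_unconditional_basic p K f" "0 \<le> M" "0 \<le> \<delta>"
    and "\<And>n. n < N \<Longrightarrow> E n \<in> sets lebesgue"
    and "AE x in lebesgue. (\<Sum>n<N. indicator (E n) x) \<le> M"
    and "\<And>n. n < N \<Longrightarrow> \<delta> \<le> Lp_norm p (\<lambda>x. indicator (E n) x *\<^sub>R f n x)"
  shows "\<delta> powr p * (\<Sum>n<N. cmod (a n) powr p) \<le> M * K powr p * Lp_norm p (\<lambda>x. \<Sum>n<N. a n * f n x) powr p"
proof -
  have "0 < p" using assms(1) by simp
  have int_Ef: "integrable lebesgue (\<lambda>x. indicator (E n) x * cmod (f n x) powr p)" if "n < N" for n
    using integrable_indicator_norm_powr[OF K_unconditional_basic_memLp[OF assms(3)] assms(6)[OF that]] .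
  note avg = K_unconditional_basic_sign_avg[OF assms(1,2,3), where a = a and N = N]
  have "\<delta> powr p * (\<Sum>n<N. cmod (a n) powr p) = (\<Sum>n<N. cmod (a n) powr p * \<delta> powr p)"
    by (simp add: sum_distrib_left mult.commute)
  also have "\<dots> \<le> (\<Sum>n<N. cmod (a n) powr p * Lp_norm p (\<lambda>x. indicator (E n) x *\<^sub>R f n x) powr p)"
    using assms(5,8) \<open>0 < p\<close> by (intro sum_mono mult_left_mono powr_mono2) auto
  also have "\<dots> = (\<Sum>n<N. cmod (a n) powr p * (\<integral>x. indicator (E n) x * cmod (f n x) powr p \<partial>lebesgue))"
    by (simp only: Lp_norm_powr[OF \<open>0 < p\<close>] norm_indicator_scaleR_powr[OF \<open>0 < p\<close>])
  also have "\<dots> = (\<integral>x. (\<Sum>n<N. cmod (a n) powr p * (indicator (E n) x * cmod (f n x) powr p)) \<partial>lebesgue)"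
    using int_Ef by (subst Bochner_Integration.integral_sum) auto
  also have "\<dots> \<le> (\<integral>x. M * sign_avg N (\<lambda>e. cmod (\<Sum>n<N. e n *\<^sub>R (a n * f n x)) powr p) \<partial>lebesgue)"
  proof (rule integral_mono_AE)
    show "AE x in lebesgue. (\<Sum>n<N. cmod (a n) powr p * (indicator (E n) x * cmod (f n x) powr p))
        \<le> M * sign_avg N (\<lambda>e. cmod (\<Sum>n<N. e n *\<^sub>R (a n * f n x)) powr p)"
      using assms(7)
    proof eventually_elim
      case (elim x)
      then show ?case
        using weighted_norm_powr_sum_le_sign_avg[OF assms(1), of N "\<lambda>n. indicator (E n) x" M "\<lambda>n. a n * f n x"]
        by (simp add: norm_mult powr_mult mult_ac)
    qed
  qed (use int_Ef avg(1) in auto)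
  also have "\<dots> \<le> M * K powr p * Lp_norm p (\<lambda>x. \<Sum>n<N. a n * f n x) powr p"
    using avg(3) assms(4) by (simp add: mult.assoc mult_left_mono)
  finally show ?thesis .
qed

lemma powr_le_powr_iff:
  fixes x y p :: real
  assumes "0 < p" "0 \<le> x" "0 \<le> y"
  shows "x powr p \<le> y powr p \<longleftrightarrow> x \<le> y"
  using assms powr_less_mono2[of p y x] powr_mono2[of p x y] by fastforce

lemma le_mult_root_if_powr_le:
  fixes x b T p :: real
  assumes "0 < p" "0 \<le> b" "0 \<le> T" "x powr p \<le> b powr p * T"
  shows "x \<le> b * T powr (1/p)"
proof (cases "0 \<le> x")
  case True
  have "(b * T powr (1/p)) powr p = b powr p * T"
    using assms by (simp add: powr_mult powr_powr)
  with assms have "x powr p \<le> (b * T powr (1/p)) powr p" by simp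
  with True assms show ?thesis by (simp add: powr_le_powr_iff)
next
  case False
  moreover have "0 \<le> b * T powr (1/p)" using assms(2) by simp
  ultimately show ?thesis by linarith
qed

lemma mult_root_le_if_le_powr:
  fixes x b T p :: real
  assumes "0 < p" "0 \<le> b" "0 \<le> T" "0 \<le> x" "b powr p * T \<le> x powr p"
  shows "b * T powr (1/p) \<le> x"
proof -
  have "(b * T powr (1/p)) powr p = b powr p * T"
    using assms by (simp add: powr_mult powr_powr)
  with assms have "(b * T powr (1/p)) powr p \<le> x powr p" by simp
  with assms show ?thesis by (simp add: powr_le_powr_iff)
qed

lemma K_unconditional_basic_equivalent_lp:
  fixes f :: "nat \<Rightarrow> real \<Rightarrow> complex" and a :: "nat \<Rightarrow> complex" and N :: nat
  assumes "1 \<le> p" "p \<le> 2" "0 < \<delta>" "K_unconditional_basic p K f"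
    and "\<forall>n. Lp_norm p (f n) \<le> C" "\<forall>n. E n \<in> sets lebesgue"
    and "AE x in lebesgue. \<forall>N. (\<Sum>n<N. indicator (E n) x) \<le> M"
    and "\<forall>n. \<delta> \<le> Lp_norm p (\<lambda>x. indicator (E n) x *\<^sub>R f n x)"
  defines "T \<equiv> \<Sum>n<N. cmod (a n) powr p" and "L \<equiv> Lp_norm p (\<lambda>x. \<Sum>n<N. a n * f n x)"
  shows "\<delta> / (max K 1 * max M 1 powr (1/p)) * T powr (1/p) \<le> L"
    and "L \<le> max K 1 * max C 1 * T powr (1/p)"
proof -
  have "0 < p" using assms(1) by simp
  have "0 \<le> T" by (simp add: T_def sum_nonneg)
  have "\<delta> \<le> Lp_norm p (f 0)"
    using assms(8) Lp_norm_indicator_le[OF \<open>0 < p\<close> K_unconditional_basic_memLp[OF assms(4)] assms(6)[rule_format]]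
    by (meson order_trans)
  then have "1 \<le> K"
    using K_unconditional_basic_ge_1[OF assms(4), of 0] assms(3) by linarith
  have "0 \<le> C"
    using assms(5) Lp_norm_nonneg order_trans by metis
  show "L \<le> max K 1 * max C 1 * T powr (1/p)"
  proof (rule le_mult_root_if_powr_le[OF \<open>0 < p\<close> _ \<open>0 \<le> T\<close>])
    have "L powr p \<le> K powr p * C powr p * T"
      unfolding L_def T_def using \<open>1 \<le> K\<close> assms(5)
      by (intro K_unconditional_basic_Lp_upper[OF assms(1,2)] assms(4)) auto
    also have "\<dots> \<le> (max K 1 * max C 1) powr p * T"
    proof -
      have "C powr p \<le> max C 1 powr p"
        using \<open>0 \<le> C\<close> \<open>0 < p\<close> by (intro powr_mono2) auto
      then show ?thesis
        using \<open>1 \<le> K\<close> \<open>0 \<le> T\<close> by (simp add: powr_mult mult_right_mono)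
    qed
    finally show "L powr p \<le> (max K 1 * max C 1) powr p * T" .
  qed simp
  show "\<delta> / (max K 1 * max M 1 powr (1/p)) * T powr (1/p) \<le> L"
  proof (rule mult_root_le_if_le_powr[OF \<open>0 < p\<close> _ \<open>0 \<le> T\<close>])
    have "\<delta> powr p * T \<le> max M 1 * K powr p * L powr p"
      unfolding L_def T_def
    proof (rule K_unconditional_basic_Lp_lower[OF assms(1) _ assms(4)])
      show "AE x in lebesgue. (\<Sum>n<N. indicator (E n) x) \<le> max M 1"
        using assms(7) by eventually_elim (meson max.coboundedI1)
    qed (use \<open>1 \<le> K\<close> assms(3,6,8) in auto)
    then show "(\<delta> / (max K 1 * max M 1 powr (1/p))) powr p * T \<le> L powr p"
      using \<open>1 \<le> K\<close> \<open>0 < p\<close> \<open>0 \<le> T\<close> assms(3)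
      by (simp add: powr_divide powr_mult powr_powr field_simps)
  qed (use \<open>1 \<le> K\<close> assms(3) in \<open>simp_all add: L_def Lp_norm_nonneg\<close>)
qed

theorem lemma3p5:
  fixes p K C M \<delta> :: real
  assumes "1 \<le> p" and "p \<le> 2" and "\<delta> > 0"
  shows "\<exists>A B. A > 0 \<and> B > 0 \<and>
    (\<forall>(f :: nat \<Rightarrow> real \<Rightarrow> complex) (E :: nat \<Rightarrow> real set).
      K_unconditional_basic p K f \<and>
      (\<forall>n. Lp_norm p (f n) \<le> C) \<and>
      (\<forall>n. E n \<in> sets lebesgue) \<and>
      (AE x in lebesgue. \<forall>N. (\<Sum>n<N. indicator (E n) x) \<le> M) \<and>
      (\<forall>n. Lp_norm p (\<lambda>x. indicator (E n) x *\<^sub>R f n x) \<ge> \<delta>)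
      \<longrightarrow>
      (\<forall>(a :: nat \<Rightarrow> complex) N.
         A * (\<Sum>n<N. cmod (a n) powr p) powr (1 / p)
           \<le> Lp_norm p (\<lambda>x. \<Sum>n<N. a n * f n x) \<and>
         Lp_norm p (\<lambda>x. \<Sum>n<N. a n * f n x)
           \<le> B * (\<Sum>n<N. cmod (a n) powr p) powr (1 / p)))"
proof (rule exI[of _ "\<delta> / (max K 1 * max M 1 powr (1/p))"], rule exI[of _ "max K 1 * max C 1"],
    intro conjI allI impI)
  show "0 < \<delta> / (max K 1 * max M 1 powr (1/p))"
    using assms(3) by simp
  show "0 < max K 1 * max C 1"
    by (simp add: less_max_iff_disj)
qed (use K_unconditional_basic_equivalent_lp[OF assms] in blast)+

end
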